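(* Let $\mathbb{K}$ be a field, let $P_1, P_2 \in \mathbb{K}[X]$ be irreducible, let $f : \mathbb{K}[X]/(P_1) \to \mathbb{K}[X]/(P_2)$ be a ring isomorphism stabilizing $\mathbb{K}$, and let $n > 1$ be an integer. Then $S_f$ is coprime to $P_2$ if and only if $f_{X,n} : \mathbb{K}[X]/(P_1^n) \to \mathbb{K}[X]/(P_2^n)$ is an isomorphism.
   Context: A ring homomorphism $f : A \to B$ between $\mathbb{K}$-algebras stabilizes $\mathbb{K}$ if there is a field automorphism $\sigma_f$ of $\mathbb{K}$ with $f(a) = \sigma_f(a)$ for all $a \in \mathbb{K}$. For a field automorphism $\sigma$ of $\mathbb{K}$, $\sigma^X$ is the ring automorphism of $\mathbb{K}[X]$ applying $\sigma$ to coefficients; $A\circ Q$ denotes $A(Q(X))$. For a ring isomorphism $f : \mathbb{K}[X]/(P_1) \to \mathbb{K}[X]/(P_2)$ stabilizing $\mathbb{K}$: $Q_f$ is the unique polynomial of degree $< \deg P_2$ such that $f$ sends the class of $X$ to the class of $Q_f$ (then $f(\text{class of }P) = \text{class of } \sigma_f^X(P)\circ Q_f$); $S_f\in\mathbb{K}[X]$ is the polynomial with $\sigma_f^X(P_1)\circ Q_f = S_f P_2$ (it exists because $\sigma_f^X(P_1)\circ Q_f$ is divisible by $P_2$); and $f_{X,n} : \mathbb{K}[X]/(P_1^n) \to \mathbb{K}[X]/(P_2^n)$ is the well-defined ring homomorphism sending the class of $P$ to the class of $\sigma_f^X(P)\circ Q_f$. *)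

theory Defs
  imports "HOL-Computational_Algebra.Computational_Algebra"
begin

definition field_aut :: "('k::field \<Rightarrow> 'k) \<Rightarrow> bool" where
  "field_aut \<sigma> \<longleftrightarrow> bij \<sigma> \<and> (\<forall>a b. \<sigma> (a + b) = \<sigma> a + \<sigma> b)
     \<and> (\<forall>a b. \<sigma> (a * b) = \<sigma> a * \<sigma> b) \<and> \<sigma> 1 = 1"

text \<open>A map F on polynomials represents a (well-defined) ring homomorphism
  K[X]/(P1) \<rightarrow> K[X]/(P2): it respects congruence mod P1 and the ring operations mod P2.\<close>
definition quot_ring_hom :: "'k::field poly \<Rightarrow> 'k poly \<Rightarrow> ('k poly \<Rightarrow> 'k poly) \<Rightarrow> bool" where
  "quot_ring_hom P1 P2 F \<longleftrightarrow>
     (\<forall>a b. a mod P1 = b mod P1 \<longrightarrow> F a mod P2 = F b mod P2)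
   \<and> (\<forall>a b. F (a + b) mod P2 = (F a + F b) mod P2)
   \<and> (\<forall>a b. F (a * b) mod P2 = (F a * F b) mod P2)
   \<and> F 1 mod P2 = 1 mod P2"

definition quot_ring_iso :: "'k::field poly \<Rightarrow> 'k poly \<Rightarrow> ('k poly \<Rightarrow> 'k poly) \<Rightarrow> bool" where
  "quot_ring_iso P1 P2 F \<longleftrightarrow> quot_ring_hom P1 P2 F
   \<and> (\<forall>a b. F a mod P2 = F b mod P2 \<longrightarrow> a mod P1 = b mod P1)
   \<and> (\<forall>b. \<exists>a. F a mod P2 = b mod P2)"

definition stabilizes_K :: "'k::field poly \<Rightarrow> ('k poly \<Rightarrow> 'k poly) \<Rightarrow> ('k \<Rightarrow> 'k) \<Rightarrow> bool" where
  "stabilizes_K P2 F \<sigma> \<longleftrightarrow> field_aut \<sigma> \<and> (\<forall>c. F [:c:] mod P2 = [:\<sigma> c:] mod P2)"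

text \<open>Q_f: the unique representative of degree < deg P2 of the image of the class of X.\<close>
definition Q_f :: "'k::field poly \<Rightarrow> ('k poly \<Rightarrow> 'k poly) \<Rightarrow> 'k poly" where
  "Q_f P2 F = F [:0, 1:] mod P2"

text \<open>S_f with \<sigma>^X(P1) \<circ> Q_f = S_f * P2.\<close>
definition S_f :: "'k::field poly \<Rightarrow> 'k poly \<Rightarrow> ('k poly \<Rightarrow> 'k poly) \<Rightarrow> ('k \<Rightarrow> 'k) \<Rightarrow> 'k poly" where
  "S_f P1 P2 F \<sigma> = pcompose (map_poly \<sigma> P1) (Q_f P2 F) div P2"

definition f_Xn :: "'k::field poly \<Rightarrow> ('k poly \<Rightarrow> 'k poly) \<Rightarrow> ('k \<Rightarrow> 'k) \<Rightarrow> 'k poly \<Rightarrow> 'k poly" where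
  "f_Xn P2 F \<sigma> P = pcompose (map_poly \<sigma> P) (Q_f P2 F)"

end

theory Submission
  imports Defs "HOL-Number_Theory.Cong"
begin

(* On representatives, f_{X,n} is the ring endomorphism phi(P) = sigma^X(P) o Q_f of K[X], and
   phi agrees with f modulo P2.  Hence P2 divides phi(a) exactly when P1 divides a,
   phi(P1) = S_f * P2, and phi is onto modulo P2.
   If P2 does not divide S_f, both properties lift to powers of P2: from P2^(k+1) | phi(a) one
   gets a = P1^k * b with P2^k * S_f^k * phi(b) divisible by P2^(k+1), so P2 | phi(b) by
   primality; and surjectivity lifts Hensel-style because S_f^k is invertible modulo P2.
   If P2 divides S_f, then phi(P1^(n-1)) = S_f^(n-1) * P2^(n-1) is divisible by P2^(2n-2), hence
   by P2^n as n > 1, although P1^n does not divide P1^(n-1): f_{X,n} is not injective. *)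

locale comm_ring_hom =
  fixes hom :: "'a::comm_ring_1 \<Rightarrow> 'b::comm_ring_1"
  assumes hom_add: "hom (a + b) = hom a + hom b"
    and hom_mult: "hom (a * b) = hom a * hom b"
    and hom_one: "hom 1 = 1"
begin

lemma hom_zero: "hom 0 = 0"
  using hom_add[of 0 0] by simp

lemma hom_diff: "hom (a - b) = hom a - hom b"
  using hom_add[of "a - b" b] by (simp add: algebra_simps)

lemma hom_power: "hom (a ^ n) = hom a ^ n"
  by (induction n) (simp_all add: hom_one hom_mult)

lemma hom_sum: "hom (sum f A) = (\<Sum>x\<in>A. hom (f x))"
  by (induction A rule: infinite_finite_induct) (simp_all add: hom_zero hom_add)

lemma comm_ring_hom_map_poly: "comm_ring_hom (map_poly hom)"
proof
  fix p q :: "'a poly"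
  show "map_poly hom (p + q) = map_poly hom p + map_poly hom q"
    by (intro poly_eqI) (simp add: coeff_map_poly hom_zero hom_add)
  show "map_poly hom (p * q) = map_poly hom p * map_poly hom q"
    by (intro poly_eqI) (simp add: coeff_map_poly hom_zero coeff_mult hom_sum hom_mult)
qed (simp add: hom_one)

end

lemma comm_ring_hom_pcompose: "comm_ring_hom (\<lambda>p. pcompose p q)"
  by standard (simp_all add: pcompose_add pcompose_mult pcompose_1)

lemma comm_ring_hom_comp:
  "comm_ring_hom f \<Longrightarrow> comm_ring_hom g \<Longrightarrow> comm_ring_hom (g \<circ> f)"
  by (simp add: comm_ring_hom_def)

lemma irreducible_coprime_iff_not_dvd:
  fixes q s :: "'a::algebraic_semidom"
  assumes "irreducible q"
  shows "coprime s q \<longleftrightarrow> \<not> q dvd s"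
proof
  assume "coprime s q"
  then show "\<not> q dvd s"
    using assms by (metis coprime_common_divisor dvd_refl irreducible_not_unit)
next
  assume not_dvd: "\<not> q dvd s"
  show "coprime s q"
  proof (rule coprimeI)
    fix d assume "d dvd s" and "d dvd q"
    then obtain e where "q = d * e"
      by (auto elim: dvdE)
    with assms have "is_unit d \<or> is_unit e"
      by (rule irreducibleD)
    with \<open>q = d * e\<close> \<open>d dvd s\<close> not_dvd show "is_unit d"
      by (auto simp: mult_unit_dvd_iff)
  qed
qed

lemma euclidean_coprime_imp_bezout:
  fixes a b :: "'a::euclidean_ring"
  assumes "coprime a b"
  shows "\<exists>u v. u * a + v * b = 1"
proof -
  define I where "I = {u * a + v * b | u v. True}"
  have closed: "x - c * y \<in> I" if "x \<in> I" "y \<in> I" for x y c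
  proof -
    from that obtain u v u' v' where "x = u * a + v * b" "y = u' * a + v' * b"
      unfolding I_def by blast
    then have "x - c * y = (u - c * u') * a + (v - c * v') * b"
      by (simp add: algebra_simps)
    then show ?thesis
      unfolding I_def by blast
  qed
  have "a = 1 * a + 0 * b" "b = 0 * a + 1 * b"
    by simp_all
  then have "a \<in> I" "b \<in> I"
    unfolding I_def by blast+
  moreover have "a \<noteq> 0 \<or> b \<noteq> 0"
    using assms by auto
  ultimately obtain d where d: "d \<in> I" "d \<noteq> 0"
    and d_min: "\<And>x. x \<in> I \<Longrightarrow> x \<noteq> 0 \<Longrightarrow> euclidean_size d \<le> euclidean_size x"
    using ex_has_least_nat[where P = "\<lambda>x. x \<in> I \<and> x \<noteq> 0" and m = euclidean_size] by blast
  have d_dvd: "d dvd x" if "x \<in> I" for x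
  proof (rule ccontr)
    assume "\<not> d dvd x"
    then have "x mod d \<noteq> 0"
      by (simp add: mod_eq_0_iff_dvd)
    moreover have "x mod d \<in> I"
      using closed[OF that d(1), of "x div d"] by (simp add: minus_div_mult_eq_mod)
    ultimately have "euclidean_size d \<le> euclidean_size (x mod d)"
      by (rule d_min[rotated])
    with mod_size_less[OF d(2)] show False
      by (simp add: not_le[symmetric])
  qed
  have "is_unit d"
    using assms d_dvd \<open>a \<in> I\<close> \<open>b \<in> I\<close> by (blast intro: coprime_common_divisor)
  then obtain w where "1 = d * w"
    by (auto elim: dvdE)
  moreover obtain u v where "d = u * a + v * b"
    using d(1) unfolding I_def by blast
  ultimately have "(w * u) * a + (w * v) * b = 1"
    by (simp add: algebra_simps)
  then show ?thesis
    by blast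
qed

lemma hom_power_dvd_imp_power_dvd:
  fixes \<phi> :: "'a::comm_ring_1 \<Rightarrow> 'b::idom"
  assumes "comm_ring_hom \<phi>" and q: "prime_elem q" and \<phi>p: "\<phi> p = s * q" and "\<not> q dvd s"
    and kernel: "\<And>a. q dvd \<phi> a \<Longrightarrow> p dvd a"
  shows "q ^ k dvd \<phi> a \<Longrightarrow> p ^ k dvd a"
proof (induction k arbitrary: a)
  case 0
  then show ?case
    by simp
next
  case (Suc k)
  interpret comm_ring_hom \<phi> by fact
  have "q ^ k dvd \<phi> a"
    using Suc.prems by (metis dvd_mult_left power_Suc2)
  then obtain b where a: "a = p ^ k * b"
    using Suc.IH by (auto elim: dvdE)
  have "\<phi> a = q ^ k * (s ^ k * \<phi> b)"
    by (simp add: a hom_mult hom_power \<phi>p power_mult_distrib)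
  then have "q ^ k * q dvd q ^ k * (s ^ k * \<phi> b)"
    using Suc.prems by (simp add: power_Suc2)
  then have "q dvd s ^ k * \<phi> b"
    using q by (simp add: prime_elem_def)
  moreover have "\<not> q dvd s ^ k"
    using q \<open>\<not> q dvd s\<close> prime_elem_dvd_power by blast
  ultimately have "p dvd b"
    using q kernel prime_elem_dvd_mult_iff by blast
  then show ?case
    by (metis a dvd_refl mult_dvd_mono power_Suc2)
qed

lemma hom_surj_mod_power:
  fixes \<phi> :: "'a::comm_ring_1 \<Rightarrow> 'b::euclidean_ring"
  assumes "comm_ring_hom \<phi>" and q: "prime_elem q" and \<phi>p: "\<phi> p = s * q" and "\<not> q dvd s"
    and surj: "\<And>c. \<exists>a. q dvd \<phi> a - c"
  shows "\<exists>a. q ^ k dvd \<phi> a - c"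
proof (induction k arbitrary: c)
  case 0
  then show ?case
    by simp
next
  case (Suc k)
  interpret comm_ring_hom \<phi> by fact
  obtain a where "q ^ k dvd \<phi> a - c"
    using Suc.IH by blast
  then obtain e where e: "\<phi> a - c = q ^ k * e" ..
  have "\<not> q dvd s ^ k"
    using q \<open>\<not> q dvd s\<close> prime_elem_dvd_power by blast
  then have "coprime (s ^ k) q"
    using q by (simp add: irreducible_coprime_iff_not_dvd prime_elem_imp_irreducible)
  then obtain u v where uv: "u * s ^ k + v * q = 1"
    using euclidean_coprime_imp_bezout by blast
  obtain a' d where d: "\<phi> a' + u * e = q * d"
    using surj[of "- (u * e)"] by auto
  \<comment> \<open>\<open>a'\<close> is chosen so that \<open>s ^ k * \<phi> a' \<equiv> - e\<close> modulo \<open>q\<close>\<close>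
  have "\<phi> (a + p ^ k * a') - c = q ^ k * (e + s ^ k * \<phi> a')"
    using e by (simp add: hom_add hom_mult hom_power \<phi>p power_mult_distrib algebra_simps)
  also have "e + s ^ k * \<phi> a' = e * (u * s ^ k + v * q) + s ^ k * \<phi> a'"
    by (simp add: uv)
  also have "\<dots> = s ^ k * (\<phi> a' + u * e) + q * (v * e)"
    by (simp add: algebra_simps)
  also have "\<dots> = q * (s ^ k * d + v * e)"
    unfolding d by (simp add: algebra_simps)
  also have "q ^ k * \<dots> = q ^ Suc k * (s ^ k * d + v * e)"
    by simp
  finally show ?case
    by (metis dvd_triv_left)
qed

lemma quot_ring_iso_iff_dvd:
  fixes \<phi> :: "'k::field poly \<Rightarrow> 'k poly"
  assumes "comm_ring_hom \<phi>"
  shows "quot_ring_iso p q \<phi> \<longleftrightarrow>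
    quot_ring_hom p q \<phi> \<and> (\<forall>a. q dvd \<phi> a \<longrightarrow> p dvd a) \<and> (\<forall>c. \<exists>a. q dvd \<phi> a - c)"
proof -
  interpret comm_ring_hom \<phi> by fact
  have "(\<forall>a b. \<phi> a mod q = \<phi> b mod q \<longrightarrow> a mod p = b mod p)
      \<longleftrightarrow> (\<forall>a. q dvd \<phi> a \<longrightarrow> p dvd a)"
    by (metis diff_zero hom_diff hom_zero mod_eq_dvd_iff)
  then show ?thesis
    by (simp add: quot_ring_iso_def mod_eq_dvd_iff)
qed

lemma quot_ring_hom_powers:
  fixes \<phi> :: "'k::field poly \<Rightarrow> 'k poly"
  assumes "comm_ring_hom \<phi>" and "q dvd \<phi> p"
  shows "quot_ring_hom (p ^ n) (q ^ n) \<phi>"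
proof -
  interpret comm_ring_hom \<phi> by fact
  have "q ^ n dvd \<phi> a - \<phi> b" if "p ^ n dvd a - b" for a b
  proof -
    from that obtain c where "a - b = p ^ n * c" ..
    then have "\<phi> a - \<phi> b = \<phi> p ^ n * \<phi> c"
      by (metis hom_diff hom_mult hom_power)
    then show ?thesis
      using assms(2) by (simp add: dvd_mult2 dvd_power_same)
  qed
  then show ?thesis
    by (simp add: quot_ring_hom_def mod_eq_dvd_iff hom_add hom_mult hom_one)
qed

lemma quot_ring_iso_powers_iff:
  fixes \<phi> :: "'k::field poly \<Rightarrow> 'k poly"
  assumes hom: "comm_ring_hom \<phi>" and "p \<noteq> 0" and q: "prime_elem q" and \<phi>p: "\<phi> p = s * q"
    and kernel: "\<And>a. q dvd \<phi> a \<longleftrightarrow> p dvd a" and surj: "\<And>c. \<exists>a. q dvd \<phi> a - c"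
    and "n > 1"
  shows "quot_ring_iso (p ^ n) (q ^ n) \<phi> \<longleftrightarrow> \<not> q dvd s"
proof
  assume iso: "quot_ring_iso (p ^ n) (q ^ n) \<phi>"
  show "\<not> q dvd s"
  proof
    assume "q dvd s"
    have "q ^ n dvd \<phi> (p ^ (n - 1))"
    proof -
      have "q ^ n dvd q ^ (n - 1) * q ^ (n - 1)"
        using \<open>n > 1\<close> by (simp add: le_imp_power_dvd power_add[symmetric])
      also have "\<dots> dvd s ^ (n - 1) * q ^ (n - 1)"
        using \<open>q dvd s\<close> by (simp add: dvd_power_same mult_dvd_mono)
      also have "\<dots> = \<phi> (p ^ (n - 1))"
        using hom by (simp add: comm_ring_hom.hom_power \<phi>p power_mult_distrib)
      finally show ?thesis .
    qed
    then have "p ^ n dvd p ^ (n - 1)"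
      using iso hom by (simp add: quot_ring_iso_iff_dvd)
    moreover have "\<not> is_unit p"
    proof
      assume "is_unit p"
      then have "q dvd \<phi> 1"
        by (simp add: kernel)
      with q hom show False
        by (simp add: comm_ring_hom.hom_one prime_elem_def)
    qed
    ultimately show False
      using \<open>p \<noteq> 0\<close> \<open>n > 1\<close> by (simp add: dvd_power_iff)
  qed
next
  assume "\<not> q dvd s"
  then show "quot_ring_iso (p ^ n) (q ^ n) \<phi>"
    using hom_power_dvd_imp_power_dvd[OF hom q \<phi>p] hom_surj_mod_power[OF hom q \<phi>p] kernel surj
    by (simp add: quot_ring_iso_iff_dvd hom quot_ring_hom_powers \<phi>p)
qed

lemma field_aut_imp_comm_ring_hom: "field_aut \<sigma> \<Longrightarrow> comm_ring_hom \<sigma>"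
  by (simp add: field_aut_def comm_ring_hom_def)

lemma field_aut_zero: "field_aut \<sigma> \<Longrightarrow> \<sigma> 0 = 0"
  by (rule comm_ring_hom.hom_zero[OF field_aut_imp_comm_ring_hom])

lemma comm_ring_hom_f_Xn:
  assumes "field_aut \<sigma>"
  shows "comm_ring_hom (f_Xn P2 F \<sigma>)"
proof -
  have "f_Xn P2 F \<sigma> = (\<lambda>p. pcompose p (Q_f P2 F)) \<circ> map_poly \<sigma>"
    by (simp add: f_Xn_def fun_eq_iff)
  then show ?thesis
    using comm_ring_hom.comm_ring_hom_map_poly[OF field_aut_imp_comm_ring_hom[OF assms]]
    by (simp add: comm_ring_hom_comp comm_ring_hom_pcompose)
qed

lemma f_Xn_const: "field_aut \<sigma> \<Longrightarrow> f_Xn P2 F \<sigma> [:c:] = [:\<sigma> c:]"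
  by (simp add: f_Xn_def map_poly_pCons field_aut_zero)

lemma f_Xn_X: "field_aut \<sigma> \<Longrightarrow> f_Xn P2 F \<sigma> [:0, 1:] = Q_f P2 F"
  by (simp add: f_Xn_def map_poly_pCons field_aut_zero pcompose_pCons)
    (simp add: field_aut_def)

lemma quot_ring_hom_stabilizing_cong_f_Xn:
  assumes hom: "quot_ring_hom P1 P2 F" and stab: "stabilizes_K P2 F \<sigma>"
  shows "[F p = f_Xn P2 F \<sigma> p] (mod P2)"
proof -
  have aut: "field_aut \<sigma>"
    using stab by (simp add: stabilizes_K_def)
  interpret \<phi>: comm_ring_hom "f_Xn P2 F \<sigma>"
    using aut by (rule comm_ring_hom_f_Xn)
  have F_add: "[F (a + b) = F a + F b] (mod P2)" for a b
    using hom by (simp add: quot_ring_hom_def cong_def)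
  have F_mult: "[F (a * b) = F a * F b] (mod P2)" for a b
    using hom by (simp add: quot_ring_hom_def cong_def)
  have F_const: "[F [:c:] = f_Xn P2 F \<sigma> [:c:]] (mod P2)" for c
    using stab aut unfolding stabilizes_K_def cong_def f_Xn_const[OF aut] by blast
  have F_X: "[F [:0, 1:] = f_Xn P2 F \<sigma> [:0, 1:]] (mod P2)"
    using aut by (simp add: f_Xn_X Q_f_def cong_def)
  show ?thesis
  proof (induction p)
    case 0
    show ?case
      using F_const[of 0] by simp
  next
    case (pCons c p)
    have X_shift: "pCons c p = [:c:] + [:0, 1:] * p"
      by simp
    have "[F (pCons c p) = F [:c:] + F [:0, 1:] * F p] (mod P2)"
      unfolding X_shift using F_add F_mult by (metis cong_add cong_refl cong_trans)
    also have "[F [:c:] + F [:0, 1:] * F p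
        = f_Xn P2 F \<sigma> [:c:] + f_Xn P2 F \<sigma> [:0, 1:] * f_Xn P2 F \<sigma> p] (mod P2)"
      using F_const F_X pCons.IH by (intro cong_add cong_mult)
    also have "f_Xn P2 F \<sigma> [:c:] + f_Xn P2 F \<sigma> [:0, 1:] * f_Xn P2 F \<sigma> p
        = f_Xn P2 F \<sigma> (pCons c p)"
      by (simp only: X_shift \<phi>.hom_add \<phi>.hom_mult)
    finally show ?case .
  qed
qed

context
  fixes P1 P2 :: "'k::field poly" and F :: "'k poly \<Rightarrow> 'k poly" and \<sigma> :: "'k \<Rightarrow> 'k"
  assumes iso: "quot_ring_iso P1 P2 F" and stab: "stabilizes_K P2 F \<sigma>"
begin

lemma cong_F_f_Xn: "[F a = f_Xn P2 F \<sigma> a] (mod P2)"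
  using iso by (intro quot_ring_hom_stabilizing_cong_f_Xn[of P1] stab) (simp add: quot_ring_iso_def)

lemma f_Xn_dvd_iff: "P2 dvd f_Xn P2 F \<sigma> a \<longleftrightarrow> P1 dvd a"
proof -
  have "f_Xn P2 F \<sigma> 0 = 0"
    using stab by (simp add: stabilizes_K_def comm_ring_hom.hom_zero comm_ring_hom_f_Xn)
  then have "P2 dvd f_Xn P2 F \<sigma> a \<longleftrightarrow> [F a = F 0] (mod P2)"
    using cong_F_f_Xn[of a] cong_F_f_Xn[of 0]
    by (metis cong_0_iff cong_sym cong_trans)
  also have "\<dots> \<longleftrightarrow> [a = 0] (mod P1)"
    using iso unfolding quot_ring_iso_def quot_ring_hom_def cong_def by blast
  finally show ?thesis
    by (simp add: cong_0_iff)
qed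

lemma f_Xn_eq_S_f_mult: "f_Xn P2 F \<sigma> P1 = S_f P1 P2 F \<sigma> * P2"
proof -
  have "P2 dvd f_Xn P2 F \<sigma> P1"
    by (simp add: f_Xn_dvd_iff)
  then show ?thesis
    by (simp add: S_f_def f_Xn_def)
qed

lemma f_Xn_surj_mod: "\<exists>a. P2 dvd f_Xn P2 F \<sigma> a - c"
proof -
  obtain a where "[F a = c] (mod P2)"
    using iso unfolding quot_ring_iso_def cong_def by blast
  then have "[f_Xn P2 F \<sigma> a = c] (mod P2)"
    using cong_F_f_Xn by (metis cong_sym cong_trans)
  then show ?thesis
    by (auto simp: cong_iff_dvd_diff)
qed

end

theorem mainTheorem10:
  fixes P1 P2 :: "'k::field poly" and F :: "'k poly \<Rightarrow> 'k poly"
    and \<sigma> :: "'k \<Rightarrow> 'k" and n :: nat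
  assumes "irreducible P1" and "irreducible P2"
    and "quot_ring_iso P1 P2 F"
    and "stabilizes_K P2 F \<sigma>"
    and "n > 1"
  shows "coprime (S_f P1 P2 F \<sigma>) P2 \<longleftrightarrow> quot_ring_iso (P1 ^ n) (P2 ^ n) (f_Xn P2 F \<sigma>)"
proof -
  have "coprime (S_f P1 P2 F \<sigma>) P2 \<longleftrightarrow> \<not> P2 dvd S_f P1 P2 F \<sigma>"
    using assms(2) by (rule irreducible_coprime_iff_not_dvd)
  also have "\<dots> \<longleftrightarrow> quot_ring_iso (P1 ^ n) (P2 ^ n) (f_Xn P2 F \<sigma>)"
  proof (rule quot_ring_iso_powers_iff[symmetric])
    show "comm_ring_hom (f_Xn P2 F \<sigma>)"
      using assms(4) by (simp add: stabilizes_K_def comm_ring_hom_f_Xn)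
    show "prime_elem P2"
      using assms(2) by (rule field_poly_irreducible_imp_prime)
  qed (use assms f_Xn_eq_S_f_mult[OF assms(3,4)] f_Xn_dvd_iff[OF assms(3,4)]
      f_Xn_surj_mod[OF assms(3,4)] in auto)
  finally show ?thesis .
qed

end
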